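(* Let $k\ge 1$ and $\delta>0$. For every $\varepsilon>0$ there is $N_0$ such that for every $N\ge N_0$ divisible by $k$ and every collection $\mathcal{A}\subseteq\mathcal{P}(N)$ that is $k$-large in $N$ and upward closed, if $Z$ is a uniformly random $N/k$-element subset of $N=\{0,\dots,N-1\}$, then with probability at least $1-\varepsilon$ there exists $A\subseteq N$ with $|A|<\delta N$ and $A\cup Z\in\mathcal{A}$.
   Context: Identify $N$ with $\{0,\dots,N-1\}$. A collection $\mathcal{A}\subseteq\mathcal{P}(N)$ is $k$-large in $N$ if for every partition of $N$ into $k$ pieces $N_0,\dots,N_{k-1}$ there is $i<k$ with $N_i\in\mathcal{A}$. $\mathcal{A}$ is upward closed if $B\in\mathcal{A}$ and $B\subseteq A\subseteq N$ imply $A\in\mathcal{A}$. *)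

theory Defs
  imports "HOL-Probability.Probability"
begin

definition is_partition_k :: "nat \<Rightarrow> nat \<Rightarrow> (nat \<Rightarrow> nat set) \<Rightarrow> bool" where
  "is_partition_k N k P \<longleftrightarrow>
     (\<Union>i<k. P i) = {..<N} \<and> (\<forall>i<k. \<forall>j<k. i \<noteq> j \<longrightarrow> P i \<inter> P j = {})"

definition k_large :: "nat \<Rightarrow> nat \<Rightarrow> nat set set \<Rightarrow> bool" where
  "k_large k N \<A> \<longleftrightarrow> (\<forall>P. is_partition_k N k P \<longrightarrow> (\<exists>i<k. P i \<in> \<A>))"

definition upward_closed :: "nat \<Rightarrow> nat set set \<Rightarrow> bool" where
  "upward_closed N \<A> \<longleftrightarrow> (\<forall>B A. B \<in> \<A> \<longrightarrow> B \<subseteq> A \<longrightarrow> A \<subseteq> {..<N} \<longrightarrow> A \<in> \<A>)"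

end

theory Submission
  imports Defs "HOL-Real_Asymp.Real_Asymp"
begin

text \<open>Let \<open>m = N / k\<close> and let \<open>S\<close> be the set of \<open>m\<close>-element members of \<open>\<A>\<close>. Applying
  \<open>k\<close>-largeness to all permuted copies of a partition into \<open>k\<close> blocks of size \<open>m\<close> shows that
  \<open>S\<close> contains at least a \<open>1/k\<close> fraction of all \<open>m\<close>-sets. Under the product measure \<open>\<mu>\<close>
  including each point with probability \<open>p = m / N\<close>, all \<open>m\<close>-sets have equal weight and
  together carry mass at least \<open>1 / (N + 1)\<close>, so \<open>\<mu>(S) \<ge> 1 / (k (N + 1))\<close>. Talagrand's
  inequality \<open>\<mu>(S) E[exp (\<lambda> d(x, S))] \<le> cosh (\<lambda>/2)\<^bsup>2N\<^esup>\<close> for the Hamming distance \<open>d\<close>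
  then shows that the \<open>m\<close>-sets at distance at least \<open>\<delta> N\<close> from \<open>S\<close> have mass at most
  \<open>exp (-\<delta>\<^sup>2 N) / \<mu>(S)\<close>, i.e. they form a fraction at most \<open>k (N + 1)\<^sup>2 exp (-\<delta>\<^sup>2 N)\<close> of all
  \<open>m\<close>-sets. Any other \<open>m\<close>-set \<open>Z\<close> has some \<open>W \<in> S\<close> with \<open>|W - Z| < \<delta> N\<close>, and
  \<open>(W - Z) \<union> Z \<in> \<A>\<close> by upward closure.\<close>

section \<open>The \<open>p\<close>-biased measure on subsets and the Hamming distance\<close>

definition biased_weight :: "real \<Rightarrow> 'a set \<Rightarrow> 'a set \<Rightarrow> real" where
  "biased_weight p I x = p ^ card x * (1 - p) ^ (card I - card x)"

definition biased_expectation :: "real \<Rightarrow> 'a set \<Rightarrow> ('a set \<Rightarrow> real) \<Rightarrow> real" where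
  "biased_expectation p I f = (\<Sum>x\<in>Pow I. biased_weight p I x * f x)"

definition hamming_dist :: "'a set \<Rightarrow> 'a set \<Rightarrow> nat" where
  "hamming_dist x y = card (sym_diff x y)"

definition hamming_setdist :: "'a set \<Rightarrow> 'a set set \<Rightarrow> nat" where
  "hamming_setdist x S = Min (hamming_dist x ` S)"

lemma biased_weight_nonneg: "0 \<le> p \<Longrightarrow> p \<le> 1 \<Longrightarrow> 0 \<le> biased_weight p I x"
  unfolding biased_weight_def by simp

lemma biased_expectation_mono:
  assumes "0 \<le> p" "p \<le> 1" "\<And>x. x \<subseteq> I \<Longrightarrow> f x \<le> g x"
  shows "biased_expectation p I f \<le> biased_expectation p I g"
  unfolding biased_expectation_def
  using assms by (intro sum_mono mult_left_mono) (auto simp: biased_weight_nonneg)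

lemma biased_expectation_nonneg:
  assumes "0 \<le> p" "p \<le> 1" "\<And>x. x \<subseteq> I \<Longrightarrow> 0 \<le> f x"
  shows "0 \<le> biased_expectation p I f"
  using biased_expectation_mono[of p I "\<lambda>_. 0" f] assms by (simp add: biased_expectation_def)

lemma biased_expectation_cmult:
  "biased_expectation p I (\<lambda>x. c * f x) = c * biased_expectation p I f"
  unfolding biased_expectation_def sum_distrib_left by (simp add: mult_ac)

lemma biased_expectation_indicator:
  assumes "finite I" "S \<subseteq> Pow I"
  shows "biased_expectation p I (indicator S) = (\<Sum>x\<in>S. biased_weight p I x)"
  unfolding biased_expectation_def using assms
  by (simp add: indicator_def if_distrib sum.If_cases Int_absorb1)

lemma biased_expectation_insert:
  assumes "finite I" "i \<notin> I"
  shows "biased_expectation p (insert i I) f =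
           (1 - p) * biased_expectation p I f + p * biased_expectation p I (\<lambda>y. f (insert i y))"
proof -
  have inj: "inj_on (insert i) (Pow I)"
    using assms(2) by (intro inj_onI) (metis PowD insert_ident subset_iff)
  have weights: "biased_weight p (insert i I) y = (1 - p) * biased_weight p I y"
    "biased_weight p (insert i I) (insert i y) = p * biased_weight p I y" if "y \<subseteq> I" for y
  proof -
    have "finite y" "i \<notin> y" "card y \<le> card I"
      using that assms finite_subset card_mono by blast+
    then show "biased_weight p (insert i I) y = (1 - p) * biased_weight p I y"
      "biased_weight p (insert i I) (insert i y) = p * biased_weight p I y"
      using assms unfolding biased_weight_def by (simp_all add: Suc_diff_le)
  qed
  have "Pow (insert i I) = Pow I \<union> insert i ` Pow I" "Pow I \<inter> insert i ` Pow I = {}"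
    using assms(2) by (auto simp: Pow_insert)
  then have "biased_expectation p (insert i I) f =
      (\<Sum>y\<in>Pow I. biased_weight p (insert i I) y * f y)
      + (\<Sum>y\<in>Pow I. biased_weight p (insert i I) (insert i y) * f (insert i y))"
    unfolding biased_expectation_def using assms(1) inj by (simp add: sum.union_disjoint sum.reindex)
  also have "\<dots> = (1 - p) * biased_expectation p I f + p * biased_expectation p I (\<lambda>y. f (insert i y))"
    unfolding biased_expectation_def sum_distrib_left
    by (intro arg_cong2[where f = "(+)"] sum.cong) (auto simp: weights)
  finally show ?thesis .
qed

abbreviation biased_prob :: "real \<Rightarrow> 'a set \<Rightarrow> 'a set set \<Rightarrow> real" where
  "biased_prob p I S \<equiv> biased_expectation p I (indicator S)"

lemma biased_prob_mono:
  "0 \<le> p \<Longrightarrow> p \<le> 1 \<Longrightarrow> S \<subseteq> T \<Longrightarrow> biased_prob p I S \<le> biased_prob p I T"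
  by (intro biased_expectation_mono) (auto simp: indicator_def)

lemma biased_prob_nonneg: "0 \<le> p \<Longrightarrow> p \<le> 1 \<Longrightarrow> 0 \<le> biased_prob p I S"
  by (intro biased_expectation_nonneg) auto

lemma biased_prob_insert:
  assumes "finite I" "i \<notin> I"
  shows "biased_prob p (insert i I) S =
    (1 - p) * biased_prob p I (S \<inter> Pow I) + p * biased_prob p I {y \<in> Pow I. insert i y \<in> S}"
  unfolding biased_expectation_insert[OF assms]
  by (intro arg_cong2[where f = "(+)"] arg_cong2[where f = "(*)"] refl)
    (auto simp: biased_expectation_def indicator_def intro!: sum.cong)

lemma biased_prob_slice:
  fixes p :: real
  assumes "finite I" "X \<subseteq> {Z. Z \<subseteq> I \<and> card Z = m}"
  shows "biased_prob p I X = card X * (p ^ m * (1 - p) ^ (card I - m))"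
proof -
  have "biased_prob p I X = (\<Sum>x\<in>X. biased_weight p I x)"
    using assms by (intro biased_expectation_indicator) auto
  also have "\<dots> = (\<Sum>x\<in>X. p ^ m * (1 - p) ^ (card I - m))"
    using assms(2) by (intro sum.cong) (auto simp: biased_weight_def)
  finally show ?thesis by simp
qed

lemma hamming_dist_insert_insert:
  "finite y \<Longrightarrow> finite z \<Longrightarrow> hamming_dist (insert i y) (insert i z) \<le> hamming_dist y z"
  unfolding hamming_dist_def by (rule card_mono) auto

lemma hamming_dist_insert_left:
  assumes "finite y" "finite z"
  shows "hamming_dist (insert i y) z \<le> hamming_dist y z + 1"
proof -
  have "sym_diff (insert i y) z \<subseteq> insert i (sym_diff y z)" by auto
  then have "hamming_dist (insert i y) z \<le> card (insert i (sym_diff y z))"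
    unfolding hamming_dist_def using assms by (intro card_mono) auto
  also have "\<dots> \<le> hamming_dist y z + 1"
    unfolding hamming_dist_def using assms by (simp add: card_insert_le_m1)
  finally show ?thesis .
qed

lemma hamming_dist_commute: "hamming_dist x y = hamming_dist y x"
  unfolding hamming_dist_def by (simp add: Un_commute)

lemma hamming_dist_insert_right:
  "finite y \<Longrightarrow> finite z \<Longrightarrow> hamming_dist y (insert i z) \<le> hamming_dist y z + 1"
  using hamming_dist_insert_left[of z y i] by (simp add: hamming_dist_commute)

lemma hamming_setdist_le: "finite S \<Longrightarrow> z \<in> S \<Longrightarrow> hamming_setdist x S \<le> hamming_dist x z"
  unfolding hamming_setdist_def by simp

lemma hamming_setdist_attained:
  "finite S \<Longrightarrow> S \<noteq> {} \<Longrightarrow> \<exists>z\<in>S. hamming_setdist x S = hamming_dist x z"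
proof -
  assume "finite S" "S \<noteq> {}"
  then have "hamming_setdist x S \<in> hamming_dist x ` S"
    unfolding hamming_setdist_def by (intro Min_in) auto
  then show ?thesis by auto
qed

lemma card_diff_le_hamming_dist: "finite x \<Longrightarrow> finite y \<Longrightarrow> card (y - x) \<le> hamming_dist x y"
  unfolding hamming_dist_def by (rule card_mono) auto

lemma hamming_setdist_le_shift:
  assumes "finite S" "finite T" "T \<noteq> {}"
    and "\<And>z. z \<in> T \<Longrightarrow> \<exists>z'\<in>S. hamming_dist x z' \<le> hamming_dist y z + c"
  shows "hamming_setdist x S \<le> hamming_setdist y T + c"
proof -
  obtain z where "z \<in> T" "hamming_setdist y T = hamming_dist y z"
    using hamming_setdist_attained[OF assms(2,3)] by blast
  moreover obtain z' where "z' \<in> S" "hamming_dist x z' \<le> hamming_dist y z + c"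
    using assms(4) \<open>z \<in> T\<close> by blast
  ultimately show ?thesis using hamming_setdist_le[OF assms(1), of z' x] by linarith
qed

section \<open>Talagrand's inequality on the Hamming cube\<close>

lemma cosh_half_sq: "4 * exp l * cosh (l / 2) ^ 2 = (1 + exp l) ^ 2" for l :: real
proof -
  have "exp l = exp (l / 2) ^ 2" "exp (- (l / 2)) * exp (l / 2) = 1"
    by (simp_all add: exp_double[symmetric] exp_minus field_simps)
  then show ?thesis unfolding cosh_def by (simp add: power2_eq_square algebra_simps)
qed

lemma cosh_le_exp_sq: "cosh x \<le> exp (x ^ 2 / 2)" for x :: real
proof -
  have "cosh x = cosh \<bar>x\<bar>" by simp
  also have "cosh \<bar>x\<bar> = exp (- \<bar>x\<bar>) * (1 + (exp (2 * \<bar>x\<bar>) - 1) / 2)"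
    unfolding cosh_def by (simp add: field_simps exp_add[symmetric])
  also have "\<dots> \<le> exp (x ^ 2 / 2)"
  proof -
    have "- (2 * \<bar>x\<bar>) * (1/2) + ln (1 + (1/2) * (exp (2 * \<bar>x\<bar>) - 1)) \<le> (2 * \<bar>x\<bar>)\<^sup>2 / 8"
      by (rule Hoeffdings_lemma_aux) auto
    then have "ln (1 + (exp (2 * \<bar>x\<bar>) - 1) / 2) \<le> \<bar>x\<bar> + x ^ 2 / 2"
      by (simp add: power_mult_distrib)
    moreover have "0 < 1 + (exp (2 * \<bar>x\<bar>) - 1) / 2" by (simp add: add_pos_nonneg)
    ultimately have "1 + (exp (2 * \<bar>x\<bar>) - 1) / 2 \<le> exp \<bar>x\<bar> * exp (x ^ 2 / 2)"
      by (metis exp_add exp_le_cancel_iff exp_ln)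
    then show ?thesis by (simp add: exp_minus field_simps)
  qed
  finally show ?thesis .
qed

lemma two_bounds_imp_affine_bound:
  fixes a b E F l :: real
  assumes "0 < b" "0 \<le> a" "a \<le> b" "0 \<le> F" "0 \<le> E" "a * F \<le> E" "b * F \<le> exp l * E"
  shows "b * b * F \<le> E * (b + exp l * (b - a))"
proof (cases "exp l * a \<le> b")
  case True
  have "b * b * F \<le> b * (exp l * E)"
    using assms by (simp add: mult_left_mono mult.assoc)
  also have "\<dots> \<le> E * (b + exp l * (b - a))"
    using True assms(5) mult_left_mono[of "exp l * a" b E] by (simp add: algebra_simps)
  finally show ?thesis .
next
  case False
  then have "0 < exp l * a" using assms(1) by linarith
  then have "0 < a" by (simp add: zero_less_mult_iff)
  have "b * (b - a) \<le> exp l * a * (b - a)"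
    using False assms(3) by (intro mult_right_mono) auto
  then have b2: "b * b \<le> a * (b + exp l * (b - a))" by (simp add: algebra_simps)
  have "a * (b * b * F) = b * b * (a * F)" by (simp add: algebra_simps)
  also have "\<dots> \<le> b * b * E" using assms(6) by (simp add: mult_left_mono)
  also have "\<dots> \<le> a * (b + exp l * (b - a)) * E" using b2 assms(5) by (rule mult_right_mono)
  finally have "a * (b * b * F) \<le> a * (E * (b + exp l * (b - a)))" by (simp add: algebra_simps)
  then show ?thesis using \<open>0 < a\<close> by simp
qed

lemma mixture_two_bounds_le_cosh:
  fixes a0 a1 b F0 F1 E l p :: real
  assumes "0 < b" "0 \<le> a0" "a0 \<le> b" "0 \<le> a1" "a1 \<le> b" "0 \<le> F0" "0 \<le> F1" "0 \<le> E"
    "a0 * F0 \<le> E" "b * F0 \<le> exp l * E" "a1 * F1 \<le> E" "b * F1 \<le> exp l * E"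
    "0 \<le> p" "p \<le> 1"
  shows "((1 - p) * a0 + p * a1) * ((1 - p) * F0 + p * F1) \<le> E * cosh (l / 2) ^ 2"
proof -
  define s where "s = (1 - p) * a0 + p * a1"
  have "b * b * ((1 - p) * F0 + p * F1) = (1 - p) * (b * b * F0) + p * (b * b * F1)"
    by (simp add: algebra_simps)
  also have "\<dots> \<le> (1 - p) * (E * (b + exp l * (b - a0))) + p * (E * (b + exp l * (b - a1)))"
    using assms two_bounds_imp_affine_bound[of b a0 F0 E l] two_bounds_imp_affine_bound[of b a1 F1 E l]
    by (intro add_mono mult_left_mono) auto
  also have "\<dots> = E * (b + exp l * (b - s))"
    unfolding s_def by (simp add: algebra_simps)
  finally have G: "b * b * ((1 - p) * F0 + p * F1) \<le> E * (b + exp l * (b - s))" .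
  have "b * b * (1 + exp l) ^ 2 - 4 * exp l * (s * (b + exp l * (b - s)))
        = (b * (1 + exp l) - 2 * exp l * s) ^ 2"
    by (simp add: power2_eq_square algebra_simps)
  then have "4 * exp l * (s * (b + exp l * (b - s))) \<le> b * b * (1 + exp l) ^ 2"
    by (metis diff_ge_0_iff_ge zero_le_power2)
  also have "\<dots> = 4 * exp l * (b * b * cosh (l / 2) ^ 2)"
    by (simp add: cosh_half_sq[symmetric] mult_ac)
  finally have AM_GM: "s * (b + exp l * (b - s)) \<le> b * b * cosh (l / 2) ^ 2" by simp
  have "0 \<le> s" unfolding s_def using assms by simp
  then have "b * b * (s * ((1 - p) * F0 + p * F1)) \<le> s * (E * (b + exp l * (b - s)))"
    using mult_left_mono[OF G \<open>0 \<le> s\<close>] by (simp add: mult_ac)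
  also have "\<dots> \<le> b * b * (E * cosh (l / 2) ^ 2)"
    using mult_left_mono[OF AM_GM assms(8)] by (simp add: mult_ac)
  finally show ?thesis unfolding s_def using assms(1) by simp
qed

lemma biased_prob_mult_expectation_le:
  fixes l c :: real
  assumes "0 \<le> p" "p \<le> 1" "0 \<le> c" "0 \<le> E"
    and bound: "biased_prob p I T * biased_expectation p I (\<lambda>y. exp (l * hamming_setdist y T)) \<le> E"
    and dominated: "T \<noteq> {} \<Longrightarrow> \<forall>y. y \<subseteq> I \<longrightarrow> g y \<le> c * exp (l * hamming_setdist y T)"
  shows "biased_prob p I T * biased_expectation p I g \<le> c * E"
proof (cases "T = {}")
  case True
  then show ?thesis using assms(3,4) by (simp add: biased_expectation_def)
next
  case False
  have "biased_prob p I T * biased_expectation p I g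
        \<le> biased_prob p I T * (c * biased_expectation p I (\<lambda>y. exp (l * hamming_setdist y T)))"
    using dominated[OF False] assms(1,2) biased_prob_nonneg
    by (intro mult_left_mono) (auto simp: biased_expectation_cmult[symmetric] intro!: biased_expectation_mono)
  also have "\<dots> \<le> c * E"
    using mult_left_mono[OF bound assms(3)] by (simp add: mult_ac)
  finally show ?thesis .
qed

lemma exp_mult_le_of_le_add:
  fixes l :: real and m n c :: nat
  assumes "0 \<le> l" "m \<le> n + c"
  shows "exp (l * m) \<le> exp l ^ c * exp (l * n)"
proof -
  have "l * m \<le> l * (c + n)" using assms by (intro mult_left_mono) auto
  then show ?thesis by (simp add: exp_of_nat_mult[symmetric] exp_add[symmetric] distrib_left mult.commute)
qed

text \<open>The first two bounds carry a \<open>+ 0\<close> so that all three match \<open>exp_mult_le_of_le_add\<close>.\<close>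

lemma hamming_setdist_insert_split:
  assumes "finite I" "i \<notin> I" "S \<subseteq> Pow (insert i I)" "y \<subseteq> I"
  defines "S0 \<equiv> S \<inter> Pow I" and "S1 \<equiv> {y \<in> Pow I. insert i y \<in> S}"
  shows "S0 \<noteq> {} \<Longrightarrow> hamming_setdist y S \<le> hamming_setdist y S0 + 0"
    and "S1 \<noteq> {} \<Longrightarrow> hamming_setdist (insert i y) S \<le> hamming_setdist y S1 + 0"
    and "S0 \<union> S1 \<noteq> {} \<Longrightarrow> w = y \<or> w = insert i y \<Longrightarrow>
      hamming_setdist w S \<le> hamming_setdist y (S0 \<union> S1) + 1"
proof -
  have finite: "finite S" "finite S0" "finite S1" "finite (S0 \<union> S1)"
    using assms(1,3) finite_subset unfolding S0_def S1_def by fastforce+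
  have fin_sub: "finite z" "i \<notin> z" if "z \<subseteq> I" for z
    using that assms(1,2) finite_subset by auto
  show "hamming_setdist y S \<le> hamming_setdist y S0 + 0" if "S0 \<noteq> {}"
    using finite that by (intro hamming_setdist_le_shift) (auto simp: S0_def)
  show "hamming_setdist (insert i y) S \<le> hamming_setdist y S1 + 0" if "S1 \<noteq> {}"
  proof (intro hamming_setdist_le_shift)
    fix z assume "z \<in> S1"
    then show "\<exists>z'\<in>S. hamming_dist (insert i y) z' \<le> hamming_dist y z + 0"
      using assms(4) fin_sub hamming_dist_insert_insert[of y z i] by (auto simp: S1_def)
  qed (use finite that in auto)
  show "hamming_setdist w S \<le> hamming_setdist y (S0 \<union> S1) + 1"
    if "S0 \<union> S1 \<noteq> {}" "w = y \<or> w = insert i y"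
  proof (intro hamming_setdist_le_shift)
    fix z assume "z \<in> S0 \<union> S1"
    then have z: "z \<subseteq> I" "z \<in> S \<or> insert i z \<in> S" by (auto simp: S0_def S1_def)
    have "hamming_dist w z \<le> hamming_dist y z + 1" "hamming_dist w (insert i z) \<le> hamming_dist y z + 1"
      using that(2) fin_sub[OF assms(4)] fin_sub[OF z(1)] hamming_dist_insert_left[of y z i]
        hamming_dist_insert_right[of y z i] hamming_dist_insert_insert[of y z i] by auto
    then show "\<exists>z'\<in>S. hamming_dist w z' \<le> hamming_dist y z + 1" using z(2) by blast
  qed (use finite that in auto)
qed

lemma talagrand_induct_step:
  fixes l :: real
  assumes "finite I" "i \<notin> I" "S \<subseteq> Pow (insert i I)" "0 \<le> p" "p \<le> 1" "0 \<le> l" "0 \<le> E"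
    and IH: "\<And>T. T \<subseteq> Pow I \<Longrightarrow>
      biased_prob p I T * biased_expectation p I (\<lambda>y. exp (l * hamming_setdist y T)) \<le> E"
  shows "biased_prob p (insert i I) S *
      biased_expectation p (insert i I) (\<lambda>x. exp (l * hamming_setdist x S)) \<le> E * cosh (l / 2) ^ 2"
proof -
  \<comment> \<open>Seen from \<open>y\<close> or \<open>insert i y\<close>, the sets in \<open>S\<close>
    are at least as close as those of \<open>S0\<close> resp. \<open>S1\<close>, and at most one step further than
    those of \<open>S0 \<union> S1\<close>.\<close>
  define S0 where "S0 = S \<inter> Pow I"
  define S1 where "S1 = {y \<in> Pow I. insert i y \<in> S}"
  define a0 where "a0 = biased_prob p I S0"
  define a1 where "a1 = biased_prob p I S1"
  define b where "b = biased_prob p I (S0 \<union> S1)"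
  define F0 where "F0 = biased_expectation p I (\<lambda>y. exp (l * hamming_setdist y S))"
  define F1 where "F1 = biased_expectation p I (\<lambda>y. exp (l * hamming_setdist (insert i y) S))"
  note dist = hamming_setdist_insert_split[OF assms(1-3), folded S0_def S1_def]
  note exp_le = exp_mult_le_of_le_add[OF assms(6)]
  have "S0 \<subseteq> Pow I" "S1 \<subseteq> Pow I" "S0 \<union> S1 \<subseteq> Pow I" by (auto simp: S0_def S1_def)
  note transfer = biased_prob_mult_expectation_le[OF assms(4,5) zero_le_power[OF exp_ge_zero] assms(7) IH]
  have bounds: "a0 * F0 \<le> exp l ^ 0 * E" "a1 * F1 \<le> exp l ^ 0 * E"
    "b * F0 \<le> exp l ^ 1 * E" "b * F1 \<le> exp l ^ 1 * E"
    unfolding a0_def a1_def b_def F0_def F1_def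
    using \<open>S0 \<subseteq> Pow I\<close> \<open>S1 \<subseteq> Pow I\<close> \<open>S0 \<union> S1 \<subseteq> Pow I\<close>
    by (intro transfer allI impI exp_le dist; simp)+
  have nonneg: "0 \<le> a0" "0 \<le> a1" "a0 \<le> b" "a1 \<le> b" "0 \<le> F0" "0 \<le> F1"
    unfolding a0_def a1_def b_def F0_def F1_def using assms(4,5)
    by (auto intro: biased_prob_nonneg biased_prob_mono biased_expectation_nonneg)
  have mu: "biased_prob p (insert i I) S = (1 - p) * a0 + p * a1"
    unfolding a0_def a1_def S0_def S1_def by (rule biased_prob_insert[OF assms(1,2)])
  have F: "biased_expectation p (insert i I) (\<lambda>x. exp (l * hamming_setdist x S)) = (1 - p) * F0 + p * F1"
    unfolding F0_def F1_def by (rule biased_expectation_insert[OF assms(1,2)])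
  show ?thesis
  proof (cases "b = 0")
    case True
    then have "a0 = 0" "a1 = 0" using nonneg by linarith+
    then show ?thesis unfolding mu using assms(7) by simp
  next
    case False
    then show ?thesis unfolding mu F
      using nonneg bounds assms(4,5,7) by (intro mixture_two_bounds_le_cosh) auto
  qed
qed

text \<open>This also holds for \<open>S = {}\<close>: there \<open>hamming_setdist x S = Min {}\<close> is unspecified,
  but \<open>biased_prob p I S = 0\<close>.\<close>

theorem talagrand_hamming:
  fixes l :: real
  assumes "finite I" "S \<subseteq> Pow I" "0 \<le> p" "p \<le> 1" "0 \<le> l"
  shows "biased_prob p I S * biased_expectation p I (\<lambda>x. exp (l * hamming_setdist x S))
           \<le> (cosh (l / 2) ^ 2) ^ card I"
  using assms(1,2)
proof (induction I arbitrary: S rule: finite_induct)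
  case empty
  then have "S = {} \<or> S = {{}}" by auto
  then show ?case by (auto simp: biased_expectation_def biased_weight_def hamming_setdist_def hamming_dist_def)
next
  case (insert i I)
  have "biased_prob p (insert i I) S *
      biased_expectation p (insert i I) (\<lambda>x. exp (l * hamming_setdist x S))
      \<le> (cosh (l / 2) ^ 2) ^ card I * cosh (l / 2) ^ 2"
    by (rule talagrand_induct_step[OF insert.hyps insert.prems assms(3-5) zero_le_power insert.IH])
      simp_all
  then show ?case using insert.hyps by (simp add: mult.commute)
qed

corollary biased_prob_far_sets:
  fixes t :: real
  assumes "finite I" "S \<subseteq> Pow I" "T \<subseteq> Pow I" "0 \<le> p" "p \<le> 1" "0 \<le> t" "card I > 0"
    and far: "\<And>x. x \<in> T \<Longrightarrow> t \<le> hamming_setdist x S"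
  shows "biased_prob p I S * biased_prob p I T \<le> exp (- (t ^ 2) / real (card I))"
proof -
  define l where "l = 2 * t / card I"
  have "0 \<le> l" unfolding l_def using assms(6) by simp
  have "exp (l * t) * biased_prob p I T = biased_expectation p I (\<lambda>x. exp (l * t) * indicator T x)"
    by (rule biased_expectation_cmult[symmetric])
  also have "\<dots> \<le> biased_expectation p I (\<lambda>x. exp (l * hamming_setdist x S))"
    using far \<open>0 \<le> l\<close> assms(4,5)
    by (intro biased_expectation_mono) (auto simp: indicator_def mult_left_mono)
  finally have "biased_prob p I S * (exp (l * t) * biased_prob p I T)
      \<le> biased_prob p I S * biased_expectation p I (\<lambda>x. exp (l * hamming_setdist x S))"
    by (rule mult_left_mono) (rule biased_prob_nonneg[OF assms(4,5)])
  also have "\<dots> \<le> (cosh (l / 2) ^ 2) ^ card I"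
    by (rule talagrand_hamming[OF assms(1,2,4,5) \<open>0 \<le> l\<close>])
  also have "\<dots> \<le> (exp ((l / 2) ^ 2 / 2) ^ 2) ^ card I"
    by (intro power_mono cosh_le_exp_sq) auto
  also have "\<dots> = exp (t ^ 2 / card I)"
    using assms(7) unfolding l_def exp_double[symmetric] exp_of_nat_mult[symmetric]
    by (simp add: power2_eq_square)
  also have "\<dots> = exp (l * t) * exp (- (t ^ 2) / card I)"
    using assms(7) unfolding l_def exp_add[symmetric] by (simp add: power2_eq_square field_simps)
  finally show ?thesis by simp
qed

section \<open>The mode of the binomial distribution\<close>

lemma pmf_binomial_Suc_ratio:
  assumes "0 \<le> p" "p \<le> 1" "j < N"
  shows "real (Suc j) * (1 - p) * pmf (binomial_pmf N p) (Suc j) = real (N - j) * p * pmf (binomial_pmf N p) j"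
proof -
  have "real (Suc j) * (1 - p) * pmf (binomial_pmf N p) (Suc j)
      = real (Suc j * (N choose Suc j)) * p ^ Suc j * (1 - p) ^ Suc (N - Suc j)"
    using assms(1,2) by (simp add: algebra_simps)
  also have "\<dots> = real ((N - j) * (N choose j)) * p ^ Suc j * (1 - p) ^ (N - j)"
    using assms(3) binomial_absorb_comp[of N j] binomial_absorption[of j N]
    by (simp only: Suc_diff_Suc)
  also have "\<dots> = real (N - j) * p * pmf (binomial_pmf N p) j"
    using assms(1,2) by (simp only: pmf_binomial of_nat_mult power_Suc mult_ac)
  finally show ?thesis .
qed

lemma binomial_pmf_unimodal:
  fixes m N j :: nat
  assumes "m < N"
  shows "j < m \<Longrightarrow> pmf (binomial_pmf N (m / N)) j \<le> pmf (binomial_pmf N (m / N)) (Suc j)"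
    and "m \<le> j \<Longrightarrow> j < N \<Longrightarrow> pmf (binomial_pmf N (m / N)) (Suc j) \<le> pmf (binomial_pmf N (m / N)) j"
proof -
  define p :: real where "p = m / N"
  define t where "t = pmf (binomial_pmf N p)"
  have p: "0 \<le> p" "p < 1" "p * N = m"
    unfolding p_def using assms by auto
  note ratio = pmf_binomial_Suc_ratio[where N = N, OF p(1) less_imp_le[OF p(2)], folded t_def]
  show "t j \<le> t (Suc j)" if "j < m"
  proof -
    have "real (Suc j) * (1 - p) * t j \<le> real (N - j) * p * t j"
      using that assms p unfolding t_def
      by (intro mult_right_mono) (auto simp: of_nat_diff algebra_simps)
    also have "\<dots> = real (Suc j) * (1 - p) * t (Suc j)"
      using ratio[of j] that assms by simp
    finally show ?thesis by (rule mult_left_le_imp_le) (use p in simp)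
  qed
  show "t (Suc j) \<le> t j" if "m \<le> j" "j < N"
  proof -
    have "real (N - j) * p * t j \<le> real (Suc j) * (1 - p) * t j"
      using that p unfolding t_def
      by (intro mult_right_mono) (auto simp: of_nat_diff algebra_simps)
    with ratio[OF that(2)] have "real (Suc j) * (1 - p) * t (Suc j) \<le> real (Suc j) * (1 - p) * t j"
      by simp
    then show ?thesis by (rule mult_left_le_imp_le) (use p in simp)
  qed
qed

lemma binomial_pmf_le_mode:
  assumes "0 < N" "m \<le> N"
  shows "pmf (binomial_pmf N (m / N)) j \<le> pmf (binomial_pmf N (m / N)) m"
proof (cases "m = N")
  case True
  then have "pmf (binomial_pmf N (m / N)) m = 1" using assms(1) by simp
  then show ?thesis using pmf_le_1 by metis
next
  case False
  then have "m < N" using assms(2) by simp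
  define t where "t = pmf (binomial_pmf N (m / N))"
  note up = binomial_pmf_unimodal(1)[OF \<open>m < N\<close>, folded t_def]
    and down = binomial_pmf_unimodal(2)[OF \<open>m < N\<close>, folded t_def]
  consider "j \<le> m" | "m \<le> j" "j \<le> N" | "N < j" by linarith
  then have "t j \<le> t m"
  proof cases
    case 1
    then show ?thesis by (induction rule: dec_induct) (use up order_trans in auto)
  next
    case 2
    then show ?thesis by (induction rule: dec_induct) (auto intro: order_trans[OF down])
  next
    case 3
    then show ?thesis using \<open>m < N\<close> unfolding t_def by (simp add: binomial_eq_0)
  qed
  then show ?thesis unfolding t_def .
qed

lemma binomial_pmf_mode_ge:
  assumes "0 < N" "m \<le> N"
  shows "1 / (real N + 1) \<le> pmf (binomial_pmf N (m / N)) m"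
proof -
  have "set_pmf (binomial_pmf N (m / N)) \<subseteq> {..N}"
    using assms by (subst set_pmf_binomial_eq) auto
  then have "1 = (\<Sum>j\<le>N. pmf (binomial_pmf N (m / N)) j)"
    by (simp add: sum_pmf_eq_1)
  also have "\<dots> \<le> (\<Sum>j\<le>N. pmf (binomial_pmf N (m / N)) m)"
    using assms by (intro sum_mono binomial_pmf_le_mode)
  finally show ?thesis by (simp add: field_simps)
qed

section \<open>Slices of \<open>k\<close>-large families\<close>

lemma permutes_exists_image:
  assumes "finite U" "W \<subseteq> U" "W' \<subseteq> U" "card W = card W'"
  obtains \<tau> where "\<tau> permutes U" "\<tau> ` W = W'"
proof -
  have "finite W" "finite W'" "finite (U - W)" "finite (U - W')"
    using assms finite_subset by auto
  moreover have "card (U - W) = card (U - W')"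
    using assms calculation by (simp add: card_Diff_subset)
  ultimately obtain f g where f: "bij_betw f W W'" and g: "bij_betw g (U - W) (U - W')"
    using assms(4) finite_same_card_bij by metis
  define h where "h x = (if x \<in> W then f x else if x \<in> U then g x else x)" for x
  have "bij_betw h W W' = bij_betw f W W'" "bij_betw h (U - W) (U - W') = bij_betw g (U - W) (U - W')"
    by (rule bij_betw_cong, simp add: h_def)+
  then have "bij_betw h W W'" "bij_betw h (U - W) (U - W')" using f g by simp_all
  then have "bij_betw h (W \<union> (U - W)) (W' \<union> (U - W'))"
    by (rule bij_betw_combine) auto
  moreover have "W \<union> (U - W) = U" "W' \<union> (U - W') = U" using assms by auto
  ultimately have "h permutes U"
    using assms(2) by (intro bij_imp_permutes) (auto simp: h_def)
  moreover have "h ` W = W'" using \<open>bij_betw h W W'\<close> by (simp add: bij_betw_def)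
  ultimately show ?thesis using that by blast
qed

lemma card_permutes_image_eq:
  assumes "finite U" "Q \<subseteq> U" "W \<subseteq> U" "card W = card Q"
  shows "card {\<sigma>. \<sigma> permutes U \<and> \<sigma> ` Q = W} = card {\<sigma>. \<sigma> permutes U \<and> \<sigma> ` Q = Q}"
proof -
  obtain \<tau> where \<tau>: "\<tau> permutes U" "\<tau> ` Q = W"
    using permutes_exists_image[OF assms(1,2,3) assms(4)[symmetric]] .
  have "inv \<tau> ` W = (inv \<tau> \<circ> \<tau>) ` Q" using \<tau>(2) image_comp[of "inv \<tau>" \<tau> Q] by simp
  then have "inv \<tau> ` W = Q" by (simp add: permutes_inv_o(2)[OF \<tau>(1)])
  have "bij_betw ((\<circ>) \<tau>) {\<sigma>. \<sigma> permutes U \<and> \<sigma> ` Q = Q} {\<sigma>. \<sigma> permutes U \<and> \<sigma> ` Q = W}"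
  proof (rule bij_betw_byWitness[where f' = "(\<circ>) (inv \<tau>)"])
    show "\<forall>\<sigma>\<in>{\<sigma>. \<sigma> permutes U \<and> \<sigma> ` Q = Q}. inv \<tau> \<circ> (\<tau> \<circ> \<sigma>) = \<sigma>"
      "\<forall>\<sigma>\<in>{\<sigma>. \<sigma> permutes U \<and> \<sigma> ` Q = W}. \<tau> \<circ> (inv \<tau> \<circ> \<sigma>) = \<sigma>"
      using permutes_inv_o[OF \<tau>(1)] by (simp_all add: o_assoc)
    have "\<tau> \<circ> \<sigma> permutes U" "(\<tau> \<circ> \<sigma>) ` Q = W" if "\<sigma> permutes U" "\<sigma> ` Q = Q" for \<sigma>
      using that \<tau> permutes_compose[of \<sigma> U \<tau>] image_comp[of \<tau> \<sigma> Q] by simp_all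
    then show "(\<circ>) \<tau> ` {\<sigma>. \<sigma> permutes U \<and> \<sigma> ` Q = Q} \<subseteq> {\<sigma>. \<sigma> permutes U \<and> \<sigma> ` Q = W}"
      by blast
    have "inv \<tau> \<circ> \<sigma> permutes U" "(inv \<tau> \<circ> \<sigma>) ` Q = Q" if "\<sigma> permutes U" "\<sigma> ` Q = W" for \<sigma>
      using that \<open>inv \<tau> ` W = Q\<close> permutes_compose[OF _ permutes_inv[OF \<tau>(1)], of \<sigma>]
        image_comp[of "inv \<tau>" \<sigma> Q] by simp_all
    then show "(\<circ>) (inv \<tau>) ` {\<sigma>. \<sigma> permutes U \<and> \<sigma> ` Q = W} \<subseteq> {\<sigma>. \<sigma> permutes U \<and> \<sigma> ` Q = Q}"
      by blast
  qed
  then show ?thesis by (simp add: bij_betw_same_card)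
qed

lemma card_permutes_image_in:
  assumes "finite U" "Q \<subseteq> U" "X \<subseteq> {W. W \<subseteq> U \<and> card W = card Q}"
  shows "card {\<sigma>. \<sigma> permutes U \<and> \<sigma> ` Q \<in> X} = card X * card {\<sigma>. \<sigma> permutes U \<and> \<sigma> ` Q = Q}"
proof -
  have "finite X" using assms(1,3) finite_subset[of X "Pow U"] by auto
  have "{\<sigma>. \<sigma> permutes U \<and> \<sigma> ` Q \<in> X} = (\<Union>W\<in>X. {\<sigma>. \<sigma> permutes U \<and> \<sigma> ` Q = W})" by auto
  also have "card \<dots> = (\<Sum>W\<in>X. card {\<sigma>. \<sigma> permutes U \<and> \<sigma> ` Q = W})"
    using \<open>finite X\<close> finite_permutations[OF assms(1)] by (intro card_UN_disjoint) auto
  also have "\<dots> = (\<Sum>W\<in>X. card {\<sigma>. \<sigma> permutes U \<and> \<sigma> ` Q = Q})"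
    using assms by (intro sum.cong refl card_permutes_image_eq) auto
  finally show ?thesis by simp
qed

lemma permutes_image_in_slice:
  "\<sigma> permutes U \<Longrightarrow> Q \<subseteq> U \<Longrightarrow> \<sigma> ` Q \<in> {W. W \<subseteq> U \<and> card W = card Q}"
  using permutes_inj_on[of \<sigma> U] permutes_in_image[of \<sigma> U] by (auto simp: card_image)

lemma card_permutations_orbit_stabilizer:
  assumes "finite U" "Q \<subseteq> U"
  shows "card {\<sigma>. \<sigma> permutes U} =
    card {W. W \<subseteq> U \<and> card W = card Q} * card {\<sigma>. \<sigma> permutes U \<and> \<sigma> ` Q = Q}"
proof -
  have "{\<sigma>. \<sigma> permutes U} = {\<sigma>. \<sigma> permutes U \<and> \<sigma> ` Q \<in> {W. W \<subseteq> U \<and> card W = card Q}}"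
    using permutes_image_in_slice[OF _ assms(2)] by blast
  then show ?thesis using card_permutes_image_in[OF assms order.refl] by simp
qed

lemma is_partition_k_image:
  assumes "\<sigma> permutes {..<N}" "is_partition_k N k P"
  shows "is_partition_k N k (\<lambda>i. \<sigma> ` P i)"
  unfolding is_partition_k_def
proof (intro conjI allI impI)
  have "(\<Union>i<k. \<sigma> ` P i) = \<sigma> ` (\<Union>i<k. P i)" by (rule image_UN[symmetric])
  then show "(\<Union>i<k. \<sigma> ` P i) = {..<N}"
    using assms(2) permutes_image[OF assms(1)] unfolding is_partition_k_def by simp
  fix i j assume "i < k" "j < k" "i \<noteq> j"
  then show "\<sigma> ` P i \<inter> \<sigma> ` P j = {}"
    using assms(2) permutes_inj[OF assms(1)] unfolding is_partition_k_def
    by (simp add: image_Int[symmetric])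
qed

lemma is_partition_k_blocks: "is_partition_k (k * m) k (\<lambda>i. {i * m..<Suc i * m})"
  unfolding is_partition_k_def
proof (intro conjI allI impI)
  show "(\<Union>i<k. {i * m..<Suc i * m}) = {..<k * m}"
  proof (intro equalityI subsetI)
    fix x assume "x \<in> (\<Union>i<k. {i * m..<Suc i * m})"
    then obtain i where "i < k" "x < Suc i * m" by auto
    then show "x \<in> {..<k * m}" using mult_le_mono1[of "Suc i" k m] by auto
  next
    fix x assume "x \<in> {..<k * m}"
    then have "0 < m" "x < k * m" by (auto intro: gr0I)
    then have "x div m < k" "x div m * m \<le> x" "x < Suc (x div m) * m"
      by (simp_all add: div_less_iff_less_mult dividend_less_div_times div_times_less_eq_dividend)
    then show "x \<in> (\<Union>i<k. {i * m..<Suc i * m})" by (intro UN_I[of "x div m"]) auto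
  qed
next
  fix i j assume "i < k" "j < k" "i \<noteq> j"
  then have "Suc i \<le> j \<or> Suc j \<le> i" by linarith
  then have "Suc i * m \<le> j * m \<or> Suc j * m \<le> i * m" using mult_le_mono1 by blast
  then show "{i * m..<Suc i * m} \<inter> {j * m..<Suc j * m} = {}" by auto
qed

lemma k_large_permutes_block:
  assumes "k_large k N \<A>" "is_partition_k N k P" "\<sigma> permutes {..<N}"
  obtains i where "i < k" "\<sigma> ` P i \<in> \<A>"
  using assms is_partition_k_image unfolding k_large_def by blast

lemma k_large_slice_density:
  assumes "k_large k N \<A>" "is_partition_k N k P" "\<And>i. i < k \<Longrightarrow> card (P i) = m"
  shows "card {Z. Z \<subseteq> {..<N} \<and> card Z = m} \<le> k * card (\<A> \<inter> {Z. Z \<subseteq> {..<N} \<and> card Z = m})"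
proof -
  \<comment> \<open>Double counting over all permutations \<open>\<sigma>\<close>: each \<open>\<lambda>i. \<sigma> ` P i\<close> is a partition, so one
    of its blocks lies in \<open>\<A>\<close>, while for fixed \<open>i\<close> the block \<open>\<sigma> ` P i\<close> hits every \<open>m\<close>-set
    equally often.\<close>
  define slice where "slice = {Z. Z \<subseteq> {..<N} \<and> card Z = m}"
  define Perms where "Perms = {\<sigma>. \<sigma> permutes {..<N}}"
  define c where "c i = card {\<sigma>. \<sigma> permutes {..<N} \<and> \<sigma> ` P i = P i}" for i
  have P: "P i \<subseteq> {..<N}" "card (P i) = m" if "i < k" for i
    using assms(2,3) that unfolding is_partition_k_def by auto
  have perms: "card Perms = card slice * c i" if "i < k" for i
    using card_permutations_orbit_stabilizer[OF _ P(1)[OF that]] P(2)[OF that]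
    unfolding Perms_def slice_def c_def by simp
  have "Perms \<subseteq> (\<Union>i<k. {\<sigma>. \<sigma> permutes {..<N} \<and> \<sigma> ` P i \<in> \<A> \<inter> slice})"
  proof
    fix \<sigma> assume "\<sigma> \<in> Perms"
    then obtain i where "i < k" "\<sigma> ` P i \<in> \<A>"
      using k_large_permutes_block[OF assms(1,2)] unfolding Perms_def by blast
    then show "\<sigma> \<in> (\<Union>i<k. {\<sigma>. \<sigma> permutes {..<N} \<and> \<sigma> ` P i \<in> \<A> \<inter> slice})"
      using \<open>\<sigma> \<in> Perms\<close> permutes_image_in_slice[OF _ P(1)] P(2)
      unfolding Perms_def slice_def by fastforce
  qed
  then have "card Perms \<le> card (\<Union>i<k. {\<sigma>. \<sigma> permutes {..<N} \<and> \<sigma> ` P i \<in> \<A> \<inter> slice})"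
    using finite_permutations[of "{..<N}"] by (intro card_mono) auto
  also have "\<dots> \<le> (\<Sum>i<k. card {\<sigma>. \<sigma> permutes {..<N} \<and> \<sigma> ` P i \<in> \<A> \<inter> slice})"
    by (rule card_UN_le) simp
  also have "\<dots> = (\<Sum>i<k. card (\<A> \<inter> slice) * c i)"
    unfolding c_def using P by (intro sum.cong refl card_permutes_image_in) (auto simp: slice_def)
  finally have "card slice * card Perms \<le> (\<Sum>i<k. card slice * (card (\<A> \<inter> slice) * c i))"
    unfolding sum_distrib_left[symmetric] by (rule mult_le_mono2)
  also have "\<dots> = (\<Sum>i<k. card (\<A> \<inter> slice) * card Perms)"
    using perms by (intro sum.cong) auto
  also have "\<dots> = k * card (\<A> \<inter> slice) * card Perms" by simp
  finally have "card slice * card Perms \<le> k * card (\<A> \<inter> slice) * card Perms" .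
  moreover have "0 < card Perms"
    unfolding Perms_def using finite_permutations[of "{..<N}"] permutes_id
    by (metis card_gt_0_iff empty_iff finite_lessThan mem_Collect_eq)
  ultimately show ?thesis unfolding slice_def by simp
qed

section \<open>Concentration on a slice\<close>

lemma card_mult_card_far_slice_le:
  fixes t :: real
  assumes "finite U" "card U = N" "0 < N" "m \<le> N" "0 \<le> t"
    and S: "S \<subseteq> {Z. Z \<subseteq> U \<and> card Z = m}" "S \<noteq> {}"
  defines "T \<equiv> {Z. Z \<subseteq> U \<and> card Z = m \<and> (\<forall>W\<in>S. t \<le> card (W - Z))}"
  shows "card S * card T * ((m / N) ^ m * (1 - m / N) ^ (N - m)) ^ 2 \<le> exp (- (t ^ 2) / N)"
proof -
  define p :: real where "p = m / N"
  have p: "0 \<le> p" "p \<le> 1" unfolding p_def using assms(3,4) by auto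
  have "finite S" using S(1) assms(1) by (intro finite_subset[of S "Pow U"]) auto
  have far: "t \<le> hamming_setdist Z S" if "Z \<in> T" for Z
  proof -
    obtain W where "W \<in> S" "hamming_setdist Z S = hamming_dist Z W"
      using hamming_setdist_attained[OF \<open>finite S\<close> S(2)] by blast
    moreover have "Z \<subseteq> U" "W \<subseteq> U" using that \<open>W \<in> S\<close> S(1) unfolding T_def by auto
    then have "finite Z" "finite W" using assms(1) finite_subset by auto
    ultimately show ?thesis
      using that card_diff_le_hamming_dist[of Z W] unfolding T_def by fastforce
  qed
  have "T \<subseteq> {Z. Z \<subseteq> U \<and> card Z = m}" unfolding T_def by auto
  then have "biased_prob p U S * biased_prob p U T \<le> exp (- (t ^ 2) / N)"
    using S(1) assms(2,3)
    by (intro biased_prob_far_sets[OF assms(1) _ _ p assms(5), unfolded assms(2)] far) auto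
  then show ?thesis
    using biased_prob_slice[OF assms(1) S(1)] biased_prob_slice[OF assms(1) \<open>T \<subseteq> _\<close>]
    unfolding p_def assms(2) by (simp add: power2_eq_square mult_ac)
qed

lemma card_far_from_dense_slice_family:
  fixes t :: real
  assumes "finite U" "card U = N" "0 < N" "m \<le> N" "0 \<le> t"
    and S: "S \<subseteq> {Z. Z \<subseteq> U \<and> card Z = m}" "card {Z. Z \<subseteq> U \<and> card Z = m} \<le> k * card S"
  defines "T \<equiv> {Z. Z \<subseteq> U \<and> card Z = m \<and> (\<forall>W\<in>S. t \<le> card (W - Z))}"
  shows "card T \<le> real k * (real N + 1) ^ 2 * exp (- (t ^ 2) / N) * card {Z. Z \<subseteq> U \<and> card Z = m}"
proof -
  define slice where "slice = {Z. Z \<subseteq> U \<and> card Z = m}"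
  \<comment> \<open>For \<open>p = m / N\<close> the slice is the mode of the binomial distribution, and every
    \<open>m\<close>-set has the same weight \<open>q\<close>.\<close>
  define q :: real where "q = (m / N) ^ m * (1 - m / N) ^ (N - m)"
  have "real m / N \<le> 1" using assms(3,4) by simp
  then have "0 \<le> q" unfolding q_def by simp
  have "0 < card slice" unfolding slice_def using n_subsets[OF assms(1)] assms(2,4) by simp
  then have "S \<noteq> {}" using S(2) unfolding slice_def by auto
  have mass: "1 / (real N + 1) \<le> card slice * q"
    using binomial_pmf_mode_ge[OF assms(3,4)] n_subsets[OF assms(1), of m] assms(2,3,4)
    unfolding slice_def q_def by simp
  have "card T * (card slice * q) ^ 2 = (card T * q) * (card slice * q) * card slice"
    by (simp add: power2_eq_square algebra_simps)
  also have "\<dots> \<le> (card T * q) * (k * card S * q) * card slice"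
    using S(2) \<open>0 \<le> q\<close> unfolding slice_def
    by (intro mult_left_mono mult_right_mono) (auto simp flip: of_nat_mult)
  also have "\<dots> = k * (card S * card T * q ^ 2) * card slice"
    by (simp add: power2_eq_square algebra_simps)
  also have "\<dots> \<le> k * exp (- (t ^ 2) / N) * card slice"
    using card_mult_card_far_slice_le[OF assms(1-5) S(1) \<open>S \<noteq> {}\<close>] unfolding T_def q_def
    by (intro mult_right_mono mult_left_mono) auto
  finally have bound: "card T * (card slice * q) ^ 2 \<le> k * exp (- (t ^ 2) / N) * card slice" .
  have "1 \<le> (card slice * q * (N + 1)) ^ 2"
    using mass by (simp add: field_simps one_le_power)
  then have "card T \<le> card T * (card slice * q) ^ 2 * (N + 1) ^ 2"
    by (simp add: power_mult_distrib mult_le_cancel_left1 mult.assoc)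
  also have "\<dots> \<le> k * exp (- (t ^ 2) / N) * card slice * (N + 1) ^ 2"
    using bound by (rule mult_right_mono) simp
  finally show ?thesis unfolding slice_def by (simp add: mult_ac add.commute)
qed

lemma prob_pmf_of_set_ge:
  assumes "finite A" "A \<noteq> {}" "F \<subseteq> A" "A - F \<subseteq> B"
  shows "1 - card F / card A \<le> measure_pmf.prob (pmf_of_set A) B"
proof -
  have "card (A - F) = card A - card F"
    using assms(1,3) finite_subset by (intro card_Diff_subset) auto
  moreover have "card (A - F) \<le> card (A \<inter> B)"
    using assms by (intro card_mono) auto
  ultimately have "real (card A) - card F \<le> card (A \<inter> B)"
    using card_mono[OF assms(1,3)] by linarith
  then have "(real (card A) - card F) / card A \<le> card (A \<inter> B) / card A"
    by (intro divide_right_mono) auto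
  then have "1 - card F / card A \<le> card (A \<inter> B) / card A"
    using assms(1,2) by (simp add: diff_divide_distrib)
  then show ?thesis using assms(1,2) by (simp add: measure_pmf_of_set)
qed

lemma upward_closed_diff_Un:
  assumes "upward_closed N \<A>" "W \<in> \<A>" "W \<subseteq> {..<N}" "Z \<subseteq> {..<N}"
  shows "(W - Z) \<union> Z \<in> \<A>"
  using assms unfolding upward_closed_def by (metis Un_Diff_cancel2 Un_subset_iff sup_ge1)

lemma prob_near_k_large_family:
  fixes \<delta> :: real
  assumes "1 \<le> k" "k dvd N" "0 < N" "0 \<le> \<delta>" "k_large k N \<A>" "upward_closed N \<A>"
  shows "1 - real k * (real N + 1) ^ 2 * exp (- (\<delta> ^ 2 * N)) \<le>
    measure_pmf.prob (pmf_of_set {Z. Z \<subseteq> {..<N} \<and> card Z = N div k})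
      {Z. \<exists>A \<subseteq> {..<N}. real (card A) < \<delta> * real N \<and> A \<union> Z \<in> \<A>}"
proof -
  define m where "m = N div k"
  define slice where "slice = {Z. Z \<subseteq> {..<N} \<and> card Z = m}"
  define near where "near = {Z. \<exists>A \<subseteq> {..<N}. real (card A) < \<delta> * real N \<and> A \<union> Z \<in> \<A>}"
  define far where "far = {Z. Z \<subseteq> {..<N} \<and> card Z = m \<and> (\<forall>W\<in>\<A> \<inter> slice. \<delta> * N \<le> card (W - Z))}"
  have N: "N = k * m" unfolding m_def using assms(2) by simp
  have "m \<le> N" unfolding N using assms(1) by simp
  have "finite slice" unfolding slice_def by (simp add: finite_subset[of _ "Pow {..<N}"] subset_eq)
  have "0 < card slice" unfolding slice_def using n_subsets[of "{..<N}" m] \<open>m \<le> N\<close> by simp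
  have "card slice \<le> k * card (\<A> \<inter> slice)"
    using k_large_slice_density[OF _ is_partition_k_blocks[of k m]] assms(5)
    unfolding slice_def N by simp
  then have "card far \<le> real k * (real N + 1) ^ 2 * exp (- ((\<delta> * N) ^ 2) / N) * card slice"
    unfolding far_def slice_def using \<open>m \<le> N\<close> assms(3,4)
    by (intro card_far_from_dense_slice_family) auto
  moreover have "(\<delta> * N) ^ 2 / N = \<delta> ^ 2 * N" using assms(3) by (simp add: power2_eq_square)
  ultimately have far_bound: "card far / card slice \<le> real k * (real N + 1) ^ 2 * exp (- (\<delta> ^ 2 * N))"
    using \<open>0 < card slice\<close> by (simp add: field_simps)
  have "slice - far \<subseteq> near"
  proof
    fix Z assume Z: "Z \<in> slice - far"
    then have "\<not> (\<forall>W\<in>\<A> \<inter> slice. \<delta> * N \<le> card (W - Z))" unfolding far_def slice_def by auto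
    then obtain W where W: "W \<in> \<A>" "W \<subseteq> {..<N}" "card (W - Z) < \<delta> * N"
      unfolding slice_def by (auto simp: not_le)
    have "Z \<subseteq> {..<N}" using Z unfolding slice_def by auto
    then have "(W - Z) \<union> Z \<in> \<A>" using upward_closed_diff_Un[OF assms(6) W(1,2)] by blast
    then show "Z \<in> near" unfolding near_def using W by (intro CollectI exI[of _ "W - Z"]) auto
  qed
  moreover have "far \<subseteq> slice" unfolding far_def slice_def by auto
  moreover have "slice \<noteq> {}" using \<open>0 < card slice\<close> by auto
  ultimately have "1 - card far / card slice \<le> measure_pmf.prob (pmf_of_set slice) near"
    using \<open>finite slice\<close> by (intro prob_pmf_of_set_ge)
  then show ?thesis using far_bound unfolding slice_def near_def m_def by simp
qed

theorem theorem2p9: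
  fixes k :: nat and \<delta> :: real
  assumes "k \<ge> 1" and "\<delta> > 0"
  shows "\<forall>\<epsilon>::real. \<epsilon> > 0 \<longrightarrow> (\<exists>N0::nat. \<forall>N \<ge> N0. \<forall>\<A>.
           k dvd N \<longrightarrow> \<A> \<subseteq> Pow {..<N} \<longrightarrow> k_large k N \<A> \<longrightarrow> upward_closed N \<A> \<longrightarrow>
           measure_pmf.prob (pmf_of_set {Z. Z \<subseteq> {..<N} \<and> card Z = N div k})
             {Z. \<exists>A \<subseteq> {..<N}. real (card A) < \<delta> * real N \<and> A \<union> Z \<in> \<A>} \<ge> 1 - \<epsilon>)"
proof (intro allI impI)
  fix \<epsilon> :: real assume "\<epsilon> > 0"
  have "(\<lambda>N. real k * (real N + 1) ^ 2 * exp (- (\<delta> ^ 2 * N))) \<longlonglongrightarrow> 0"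
    using assms(2) by real_asymp
  from order_tendstoD(2)[OF this \<open>\<epsilon> > 0\<close>]
  obtain N1 where N1: "\<And>N. N \<ge> N1 \<Longrightarrow> real k * (real N + 1) ^ 2 * exp (- (\<delta> ^ 2 * N)) < \<epsilon>"
    by (auto simp: eventually_sequentially)
  have "1 - \<epsilon> \<le> measure_pmf.prob (pmf_of_set {Z. Z \<subseteq> {..<N} \<and> card Z = N div k})
      {Z. \<exists>A \<subseteq> {..<N}. real (card A) < \<delta> * real N \<and> A \<union> Z \<in> \<A>}"
    if "max N1 1 \<le> N" "k dvd N" "k_large k N \<A>" "upward_closed N \<A>" for N \<A>
    using N1[of N] prob_near_k_large_family[of k N \<delta> \<A>] that assms by fastforce
  then show "\<exists>N0. \<forall>N \<ge> N0. \<forall>\<A>. k dvd N \<longrightarrow> \<A> \<subseteq> Pow {..<N} \<longrightarrow> k_large k N \<A> \<longrightarrow>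
      upward_closed N \<A> \<longrightarrow> measure_pmf.prob (pmf_of_set {Z. Z \<subseteq> {..<N} \<and> card Z = N div k})
        {Z. \<exists>A \<subseteq> {..<N}. real (card A) < \<delta> * real N \<and> A \<union> Z \<in> \<A>} \<ge> 1 - \<epsilon>"
    by blast
qed

end
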